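(* Let $(E,\mu)$, $(F,\nu)$, $(H,\omega)$ be fuzzy Riesz spaces with $F$ fuzzy Dedekind complete, let $Q:E\rightarrow H$ be a fuzzy lattice homomorphism and $S:H\rightarrow F$ a fuzzy positive linear operator. Then every fuzzy positive linear operator $T:E\rightarrow F$ with $T\le S\circ Q$ admits a factorization $T=S_1\circ Q$, where $S_1:H\rightarrow F$ is linear and $0\le S_1\le S$.
   Context: A fuzzy order on a real vector space $E$ is a map $\mu:E\times E\to[0,1]$ with $\mu(x,x)=1$; $\mu(x,y)+\mu(y,x)>1$ implies $x=y$; and $\mu(x,z)\ge\sup_{y}\min(\mu(x,y),\mu(y,z))$. Write $x\le y$ for $\mu(x,y)>\frac12$; upper bounds, suprema and infima are taken with respect to this relation. $(E,\mu)$ is a fuzzy ordered linear space if $\mu(x_1,x_2)>\frac12$ implies $\mu(x_1,x_2)\le\mu(x_1+x,x_2+x)$ for all $x$ and $\mu(x_1,x_2)\le\mu(\alpha x_1,\alpha x_2)$ for all $\alpha>0$; it is a fuzzy Riesz space if $x\vee y=\sup\{x,y\}$, $x\wedge y=\inf\{x,y\}$ exist for all $x,y$; fuzzy Dedekind complete if every nonempty subset bounded above has a supremum. A linear operator $R$ is fuzzy positive ($0\le R$) if $0\le x$ implies $0\le Rx$; for linear operators $R_1,R_2$ between the same spaces, $R_1\le R_2$ means $R_2-R_1$ is fuzzy positive. A fuzzy lattice homomorphism is a linear map with $Q(x\vee y)=Qx\vee Qy$. *)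

theory Defs
  imports Main "HOL.Real_Vector_Spaces"
begin

definition fuzzy_order :: "('a \<Rightarrow> 'a \<Rightarrow> real) \<Rightarrow> bool" where
  "fuzzy_order \<mu> \<longleftrightarrow>
     (\<forall>x y. 0 \<le> \<mu> x y \<and> \<mu> x y \<le> 1) \<and>
     (\<forall>x. \<mu> x x = 1) \<and>
     (\<forall>x y. \<mu> x y + \<mu> y x > 1 \<longrightarrow> x = y) \<and>
     (\<forall>x z. \<mu> x z \<ge> (SUP y. min (\<mu> x y) (\<mu> y z)))"

definition fle :: "('a \<Rightarrow> 'a \<Rightarrow> real) \<Rightarrow> 'a \<Rightarrow> 'a \<Rightarrow> bool" where
  "fle \<mu> x y \<longleftrightarrow> \<mu> x y > 1/2"

definition is_fsup :: "('a \<Rightarrow> 'a \<Rightarrow> real) \<Rightarrow> 'a set \<Rightarrow> 'a \<Rightarrow> bool" where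
  "is_fsup \<mu> A s \<longleftrightarrow> (\<forall>a\<in>A. fle \<mu> a s) \<and> (\<forall>u. (\<forall>a\<in>A. fle \<mu> a u) \<longrightarrow> fle \<mu> s u)"

definition is_finf :: "('a \<Rightarrow> 'a \<Rightarrow> real) \<Rightarrow> 'a set \<Rightarrow> 'a \<Rightarrow> bool" where
  "is_finf \<mu> A s \<longleftrightarrow> (\<forall>a\<in>A. fle \<mu> s a) \<and> (\<forall>u. (\<forall>a\<in>A. fle \<mu> u a) \<longrightarrow> fle \<mu> u s)"

definition fjoin :: "('a \<Rightarrow> 'a \<Rightarrow> real) \<Rightarrow> 'a \<Rightarrow> 'a \<Rightarrow> 'a" where
  "fjoin \<mu> x y = (THE s. is_fsup \<mu> {x, y} s)"

definition fuzzy_ordered_linear_space :: "('a::real_vector \<Rightarrow> 'a \<Rightarrow> real) \<Rightarrow> bool" where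
  "fuzzy_ordered_linear_space \<mu> \<longleftrightarrow> fuzzy_order \<mu> \<and>
     (\<forall>x1 x2. \<mu> x1 x2 > 1/2 \<longrightarrow>
        (\<forall>x. \<mu> x1 x2 \<le> \<mu> (x1 + x) (x2 + x)) \<and>
        (\<forall>\<alpha>::real. \<alpha> > 0 \<longrightarrow> \<mu> x1 x2 \<le> \<mu> (\<alpha> *\<^sub>R x1) (\<alpha> *\<^sub>R x2)))"

definition fuzzy_riesz_space :: "('a::real_vector \<Rightarrow> 'a \<Rightarrow> real) \<Rightarrow> bool" where
  "fuzzy_riesz_space \<mu> \<longleftrightarrow> fuzzy_ordered_linear_space \<mu> \<and>
     (\<forall>x y. (\<exists>s. is_fsup \<mu> {x, y} s) \<and> (\<exists>i. is_finf \<mu> {x, y} i))"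

definition fuzzy_dedekind_complete :: "('a \<Rightarrow> 'a \<Rightarrow> real) \<Rightarrow> bool" where
  "fuzzy_dedekind_complete \<mu> \<longleftrightarrow>
     (\<forall>A. A \<noteq> {} \<and> (\<exists>u. \<forall>a\<in>A. fle \<mu> a u) \<longrightarrow> (\<exists>s. is_fsup \<mu> A s))"

definition fuzzy_positive ::
  "('a::real_vector \<Rightarrow> 'a \<Rightarrow> real) \<Rightarrow> ('b::real_vector \<Rightarrow> 'b \<Rightarrow> real) \<Rightarrow> ('a \<Rightarrow> 'b) \<Rightarrow> bool" where
  "fuzzy_positive \<mu> \<nu> R \<longleftrightarrow> (\<forall>x. fle \<mu> 0 x \<longrightarrow> fle \<nu> 0 (R x))"

definition op_fle ::
  "('a::real_vector \<Rightarrow> 'a \<Rightarrow> real) \<Rightarrow> ('b::real_vector \<Rightarrow> 'b \<Rightarrow> real) \<Rightarrow> ('a \<Rightarrow> 'b) \<Rightarrow> ('a \<Rightarrow> 'b) \<Rightarrow> bool" where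
  "op_fle \<mu> \<nu> R1 R2 \<longleftrightarrow> fuzzy_positive \<mu> \<nu> (\<lambda>x. R2 x - R1 x)"

definition fuzzy_lattice_hom ::
  "('a::real_vector \<Rightarrow> 'a \<Rightarrow> real) \<Rightarrow> ('b::real_vector \<Rightarrow> 'b \<Rightarrow> real) \<Rightarrow> ('a \<Rightarrow> 'b) \<Rightarrow> bool" where
  "fuzzy_lattice_hom \<mu> \<nu> Q \<longleftrightarrow> linear Q \<and> (\<forall>x y. Q (fjoin \<mu> x y) = fjoin \<nu> (Q x) (Q y))"

end

theory Submission
  imports Defs
begin

text \<open>
  Put \<open>p h = S (h\<^sup>+)\<close> on \<open>H\<close>; it is sublinear since \<open>S\<close> is positive.
  For \<open>x\<close> in \<open>E\<close>, positivity of \<open>T\<close> and \<open>T \<le> S \<circ> Q\<close> give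
  \<open>T x \<le> T x\<^sup>+ \<le> S (Q x\<^sup>+) = p (Q x)\<close>, and \<open>0 \<le> T w \<le> S (Q w) = 0\<close> for
  \<open>w \<ge> 0\<close> in the kernel of \<open>Q\<close>, so \<open>T\<close> vanishes on that kernel (as \<open>Q x\<^sup>+ = (Q x)\<^sup>+\<close>).
  Hence \<open>T\<close> induces a linear map on the range of \<open>Q\<close> dominated by \<open>p\<close>, which the
  Hahn-Banach-Kantorovich theorem extends to a linear \<open>S\<^sub>1 \<le> p\<close> on all of \<open>H\<close>.
  For \<open>h \<ge> 0\<close> this gives \<open>S\<^sub>1 h \<le> S h\<close> and \<open>-S\<^sub>1 h = S\<^sub>1 (-h) \<le> S ((-h)\<^sup>+) = 0\<close>.
  The extension theorem is proved by Zorn's lemma on dominated partial linear maps; a maximal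
  one is total because Dedekind completeness of \<open>F\<close> lets any dominated partial map be
  extended by one dimension, the new value being a supremum.
\<close>

section \<open>Fuzzy ordered vector spaces\<close>

locale fuzzy_ovs =
  fixes \<mu> :: "'a::real_vector \<Rightarrow> 'a \<Rightarrow> real"
  assumes fuzzy_ordered_linear_space: "fuzzy_ordered_linear_space \<mu>"
begin

abbreviation le :: "'a \<Rightarrow> 'a \<Rightarrow> bool" (infix \<open>\<preceq>\<close> 50)
  where "x \<preceq> y \<equiv> fle \<mu> x y"

lemma fuzzy_order: "fuzzy_order \<mu>"
  using fuzzy_ordered_linear_space by (simp add: fuzzy_ordered_linear_space_def)

lemma le_refl: "x \<preceq> x"
  using fuzzy_order by (simp add: fuzzy_order_def fle_def)

lemma le_antisym: "x \<preceq> y \<Longrightarrow> y \<preceq> x \<Longrightarrow> x = y"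
  using fuzzy_order by (auto simp: fuzzy_order_def fle_def)

lemma le_trans [trans]:
  assumes "x \<preceq> y" "y \<preceq> z"
  shows "x \<preceq> z"
proof -
  have "bdd_above (range (\<lambda>y. min (\<mu> x y) (\<mu> y z)))"
    using fuzzy_order by (intro bdd_aboveI[of _ 1]) (auto simp: fuzzy_order_def min_le_iff_disj)
  then have "min (\<mu> x y) (\<mu> y z) \<le> (SUP y. min (\<mu> x y) (\<mu> y z))"
    by (rule cSUP_upper[rotated]) simp
  also have "\<dots> \<le> \<mu> x z"
    using fuzzy_order by (simp add: fuzzy_order_def)
  finally show ?thesis
    using assms by (simp add: fle_def)
qed

lemma add_right_mono: "x \<preceq> y \<Longrightarrow> x + z \<preceq> y + z"
  using fuzzy_ordered_linear_space unfolding fuzzy_ordered_linear_space_def fle_def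
  by (meson order_less_le_trans)

lemma scaleR_left_mono: "x \<preceq> y \<Longrightarrow> 0 < c \<Longrightarrow> c *\<^sub>R x \<preceq> c *\<^sub>R y"
  using fuzzy_ordered_linear_space unfolding fuzzy_ordered_linear_space_def fle_def
  by (meson order_less_le_trans)

lemma scaleR_le_cancel_left: "0 < c \<Longrightarrow> c *\<^sub>R x \<preceq> c *\<^sub>R y \<longleftrightarrow> x \<preceq> y"
  using scaleR_left_mono[of "c *\<^sub>R x" "c *\<^sub>R y" "inverse c"] scaleR_left_mono[of x y c]
  by auto

lemma scaleR_le_iff_le_divideR: "0 < c \<Longrightarrow> c *\<^sub>R x \<preceq> y \<longleftrightarrow> x \<preceq> y /\<^sub>R c"
  using scaleR_le_cancel_left[of c x "y /\<^sub>R c"] by simp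

lemma scaleR_nonneg_iff: "0 < c \<Longrightarrow> 0 \<preceq> c *\<^sub>R x \<longleftrightarrow> 0 \<preceq> x"
  using scaleR_le_cancel_left[of c 0 x] by simp

lemma le_iff_diff_nonneg: "x \<preceq> y \<longleftrightarrow> 0 \<preceq> y - x"
  using add_right_mono[of x y "- x"] add_right_mono[of 0 "y - x" x] by auto

lemma diff_le_diff_iff_add_le: "a - b \<preceq> c - d \<longleftrightarrow> a + d \<preceq> c + b"
  using le_iff_diff_nonneg[of "a - b"] le_iff_diff_nonneg[of "a + d"]
  by (simp add: algebra_simps)

lemma neg_nonneg_iff_le_0: "0 \<preceq> - x \<longleftrightarrow> x \<preceq> 0"
  using le_iff_diff_nonneg[of x 0] by simp

lemma add_mono: "a \<preceq> b \<Longrightarrow> c \<preceq> d \<Longrightarrow> a + c \<preceq> b + d"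
  using add_right_mono[of a b c] add_right_mono[of c d b] le_trans by (simp add: add.commute)

lemma fsup_unique: "is_fsup \<mu> A s \<Longrightarrow> is_fsup \<mu> A t \<Longrightarrow> s = t"
  unfolding is_fsup_def using le_antisym by blast

lemma fjoin_eqI: "is_fsup \<mu> {x, y} s \<Longrightarrow> fjoin \<mu> x y = s"
  unfolding fjoin_def using fsup_unique by blast

lemma positive_linear_mono:
  assumes "fuzzy_ovs \<nu>" "linear S" "fuzzy_positive \<mu> \<nu> S" "x \<preceq> y"
  shows "fle \<nu> (S x) (S y)"
  using assms fuzzy_ovs.le_iff_diff_nonneg[OF assms(1)] le_iff_diff_nonneg[of x y]
  by (auto simp: fuzzy_positive_def linear_diff)

end

section \<open>Positive parts in fuzzy Riesz spaces\<close>

locale fuzzy_riesz = fuzzy_ovs +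
  assumes fsup_pair_exists: "\<exists>s. is_fsup \<mu> {x, y} s"
begin

abbreviation pos :: "'a \<Rightarrow> 'a"
  where "pos x \<equiv> fjoin \<mu> x 0"

lemma is_fsup_pos: "is_fsup \<mu> {x, 0} (pos x)"
  using fsup_pair_exists[of x 0] fjoin_eqI by blast

lemma le_pos: "x \<preceq> pos x"
  using is_fsup_pos by (simp add: is_fsup_def)

lemma pos_nonneg: "0 \<preceq> pos x"
  using is_fsup_pos by (simp add: is_fsup_def)

lemma pos_least: "x \<preceq> u \<Longrightarrow> 0 \<preceq> u \<Longrightarrow> pos x \<preceq> u"
  using is_fsup_pos by (simp add: is_fsup_def)

lemma pos_minus_nonneg: "0 \<preceq> pos x - x"
  using le_pos le_iff_diff_nonneg by blast

lemma pos_eq_self: "0 \<preceq> x \<Longrightarrow> pos x = x"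
  by (rule fjoin_eqI) (simp add: is_fsup_def le_refl)

lemma pos_eq_0: "x \<preceq> 0 \<Longrightarrow> pos x = 0"
  by (rule fjoin_eqI) (simp add: is_fsup_def le_refl)

lemma pos_add_le: "pos (x + y) \<preceq> pos x + pos y"
  using add_mono[OF le_pos le_pos] add_mono[OF pos_nonneg pos_nonneg]
  by (intro pos_least) simp_all

lemma pos_scaleR:
  assumes "0 < c"
  shows "pos (c *\<^sub>R x) = c *\<^sub>R pos x"
proof (rule fjoin_eqI)
  show "is_fsup \<mu> {c *\<^sub>R x, 0} (c *\<^sub>R pos x)"
    using is_fsup_pos[of x] assms by (simp add: is_fsup_def scaleR_le_iff_le_divideR scaleR_nonneg_iff)
qed

end

lemma fuzzy_riesz_if_fuzzy_riesz_space: "fuzzy_riesz_space \<mu> \<Longrightarrow> fuzzy_riesz \<mu>"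
  unfolding fuzzy_riesz_space_def fuzzy_riesz_def fuzzy_riesz_axioms_def fuzzy_ovs_def by blast

section \<open>Partial linear maps\<close>

definition partial_linear_graph :: "('a::real_vector \<times> 'b::real_vector) set \<Rightarrow> bool" where
  "partial_linear_graph \<Gamma> \<longleftrightarrow>
     (\<forall>x a b. (x, a) \<in> \<Gamma> \<longrightarrow> (x, b) \<in> \<Gamma> \<longrightarrow> a = b) \<and> (0, 0) \<in> \<Gamma> \<and>
     (\<forall>x a y b. (x, a) \<in> \<Gamma> \<longrightarrow> (y, b) \<in> \<Gamma> \<longrightarrow> (x + y, a + b) \<in> \<Gamma>) \<and>
     (\<forall>c x a. (x, a) \<in> \<Gamma> \<longrightarrow> (c *\<^sub>R x, c *\<^sub>R a) \<in> \<Gamma>)"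

definition graph_extend :: "('a::real_vector \<times> 'b::real_vector) set \<Rightarrow> 'a \<Rightarrow> 'b \<Rightarrow> ('a \<times> 'b) set" where
  "graph_extend \<Gamma> h c = {(m + t *\<^sub>R h, g + t *\<^sub>R c) | m g t. (m, g) \<in> \<Gamma>}"

context
  fixes \<Gamma> :: "('a::real_vector \<times> 'b::real_vector) set"
  assumes \<Gamma>: "partial_linear_graph \<Gamma>"
begin

lemma partial_linear_graph_unique: "(x, a) \<in> \<Gamma> \<Longrightarrow> (x, b) \<in> \<Gamma> \<Longrightarrow> a = b"
  using \<Gamma> by (simp add: partial_linear_graph_def)

lemma partial_linear_graph_zero: "(0, 0) \<in> \<Gamma>"
  using \<Gamma> by (simp add: partial_linear_graph_def)

lemma partial_linear_graph_add: "(x, a) \<in> \<Gamma> \<Longrightarrow> (y, b) \<in> \<Gamma> \<Longrightarrow> (x + y, a + b) \<in> \<Gamma>"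
  using \<Gamma> by (simp add: partial_linear_graph_def)

lemma partial_linear_graph_scaleR: "(x, a) \<in> \<Gamma> \<Longrightarrow> (c *\<^sub>R x, c *\<^sub>R a) \<in> \<Gamma>"
  using \<Gamma> by (simp add: partial_linear_graph_def)

lemma partial_linear_graph_diff:
  assumes "(x, a) \<in> \<Gamma>" "(y, b) \<in> \<Gamma>"
  shows "(x - y, a - b) \<in> \<Gamma>"
  using partial_linear_graph_add[OF assms(1) partial_linear_graph_scaleR[OF assms(2), of "-1"]]
  by simp

lemma partial_linear_graph_total_imp_linear:
  assumes "\<And>x. \<exists>a. (x, a) \<in> \<Gamma>"
  obtains R where "linear R" "\<And>x a. (x, a) \<in> \<Gamma> \<longleftrightarrow> a = R x"
proof
  define R where "R x = (THE a. (x, a) \<in> \<Gamma>)" for x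
  show graph_R: "(x, a) \<in> \<Gamma> \<longleftrightarrow> a = R x" for x a
    using assms[of x] partial_linear_graph_unique unfolding R_def by (metis theI)
  show "linear R"
    by (rule linearI) (use graph_R partial_linear_graph_add partial_linear_graph_scaleR in metis)+
qed

lemma subset_graph_extend: "\<Gamma> \<subseteq> graph_extend \<Gamma> h c"
  unfolding graph_extend_def by force

lemma mem_graph_extend: "(h, c) \<in> graph_extend \<Gamma> h c"
proof -
  have "(h, c) = (0 + 1 *\<^sub>R h, 0 + 1 *\<^sub>R c)"
    by simp
  then show ?thesis
    unfolding graph_extend_def using partial_linear_graph_zero by blast
qed

lemma partial_linear_graph_graph_extend:
  assumes h: "h \<notin> Domain \<Gamma>"
  shows "partial_linear_graph (graph_extend \<Gamma> h c)"
  unfolding partial_linear_graph_def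
proof (intro conjI allI impI)
  fix x a b
  assume "(x, a) \<in> graph_extend \<Gamma> h c" "(x, b) \<in> graph_extend \<Gamma> h c"
  then obtain m1 g1 t1 m2 g2 t2 where e: "(m1, g1) \<in> \<Gamma>" "(m2, g2) \<in> \<Gamma>"
    "x = m1 + t1 *\<^sub>R h" "a = g1 + t1 *\<^sub>R c" "x = m2 + t2 *\<^sub>R h" "b = g2 + t2 *\<^sub>R c"
    unfolding graph_extend_def by blast
  have "t1 = t2"
  proof (rule ccontr)
    assume "t1 \<noteq> t2"
    have "m2 - m1 = (t1 - t2) *\<^sub>R h"
      using e(3,5) by (simp add: algebra_simps)
    then have "(h, inverse (t1 - t2) *\<^sub>R (g2 - g1)) \<in> \<Gamma>"
      using partial_linear_graph_scaleR[OF partial_linear_graph_diff[OF e(2,1)],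
          of "inverse (t1 - t2)"] \<open>t1 \<noteq> t2\<close>
      by simp
    then show False
      using h by blast
  qed
  then show "a = b"
    using e partial_linear_graph_unique by auto
next
  show "(0, 0) \<in> graph_extend \<Gamma> h c"
    using subset_graph_extend partial_linear_graph_zero by blast
next
  fix x a y b
  assume "(x, a) \<in> graph_extend \<Gamma> h c" "(y, b) \<in> graph_extend \<Gamma> h c"
  then obtain m1 g1 t1 m2 g2 t2 where e: "(m1, g1) \<in> \<Gamma>" "(m2, g2) \<in> \<Gamma>"
    "x = m1 + t1 *\<^sub>R h" "a = g1 + t1 *\<^sub>R c" "y = m2 + t2 *\<^sub>R h" "b = g2 + t2 *\<^sub>R c"
    unfolding graph_extend_def by blast
  have "x + y = (m1 + m2) + (t1 + t2) *\<^sub>R h" "a + b = (g1 + g2) + (t1 + t2) *\<^sub>R c"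
    using e by (simp_all add: algebra_simps)
  then show "(x + y, a + b) \<in> graph_extend \<Gamma> h c"
    unfolding graph_extend_def using partial_linear_graph_add[OF e(1,2)] by blast
next
  fix r x a
  assume "(x, a) \<in> graph_extend \<Gamma> h c"
  then obtain m g t where e: "(m, g) \<in> \<Gamma>" "x = m + t *\<^sub>R h" "a = g + t *\<^sub>R c"
    unfolding graph_extend_def by blast
  have "r *\<^sub>R x = r *\<^sub>R m + (r * t) *\<^sub>R h" "r *\<^sub>R a = r *\<^sub>R g + (r * t) *\<^sub>R c"
    using e by (simp_all add: algebra_simps)
  then show "(r *\<^sub>R x, r *\<^sub>R a) \<in> graph_extend \<Gamma> h c"
    unfolding graph_extend_def using partial_linear_graph_scaleR[OF e(1)] by blast
qed

end

lemma partial_linear_graph_Union_chain: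
  assumes "C \<noteq> {}" "chain\<^sub>\<subseteq> C" "\<And>\<Gamma>. \<Gamma> \<in> C \<Longrightarrow> partial_linear_graph \<Gamma>"
  shows "partial_linear_graph (\<Union>C)"
proof -
  have common: "\<exists>\<Gamma>\<in>C. u \<in> \<Gamma> \<and> v \<in> \<Gamma>" if "u \<in> \<Union>C" "v \<in> \<Union>C" for u v
    using that \<open>chain\<^sub>\<subseteq> C\<close> unfolding chain_subset_def by blast
  show ?thesis
    unfolding partial_linear_graph_def
  proof (intro conjI allI impI)
    show "(0, 0) \<in> \<Union>C"
      using assms(1,3) partial_linear_graph_zero by blast
  qed (use common assms(3) partial_linear_graph_unique partial_linear_graph_add
      partial_linear_graph_scaleR in \<open>meson UnionI\<close>)+
qed

lemma partial_linear_graph_of_subspace: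
  assumes "subspace V"
    and "\<And>x y. x \<in> V \<Longrightarrow> y \<in> V \<Longrightarrow> f (x + y) = f x + f y"
    and "\<And>c x. x \<in> V \<Longrightarrow> f (c *\<^sub>R x) = c *\<^sub>R f x"
  shows "partial_linear_graph {(x, f x) | x. x \<in> V}"
  using assms subspace_0[OF assms(1)] subspace_add[OF assms(1)] subspace_scale[OF assms(1)]
    assms(3)[of 0 0]
  unfolding partial_linear_graph_def by auto

section \<open>The Hahn-Banach-Kantorovich extension theorem\<close>

locale fuzzy_dedekind_ovs = fuzzy_ovs +
  assumes dedekind_complete: "fuzzy_dedekind_complete \<mu>"
begin

context
  fixes p :: "'h::real_vector \<Rightarrow> 'a"
  assumes p_subadditive: "\<And>x y. p (x + y) \<preceq> p x + p y"
    and p_pos_homogeneous: "\<And>c x. 0 < c \<Longrightarrow> p (c *\<^sub>R x) = c *\<^sub>R p x"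
begin

lemma extension_value_exists:
  assumes \<Gamma>: "partial_linear_graph \<Gamma>" and dom: "\<And>x a. (x, a) \<in> \<Gamma> \<Longrightarrow> a \<preceq> p x"
  obtains c where "\<And>m g. (m, g) \<in> \<Gamma> \<Longrightarrow> g - p (m - h) \<preceq> c"
    and "\<And>m g. (m, g) \<in> \<Gamma> \<Longrightarrow> c \<preceq> p (m + h) - g"
proof -
  have separated: "g1 - p (m1 - h) \<preceq> p (m2 + h) - g2"
    if "(m1, g1) \<in> \<Gamma>" "(m2, g2) \<in> \<Gamma>" for m1 g1 m2 g2
  proof -
    have "g1 + g2 \<preceq> p (m1 + m2)"
      using dom partial_linear_graph_add[OF \<Gamma> that] by blast
    also have "\<dots> \<preceq> p (m1 - h) + p (m2 + h)"
      using p_subadditive[of "m1 - h" "m2 + h"] by simp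
    finally show ?thesis
      by (simp add: diff_le_diff_iff_add_le add.commute)
  qed
  define B where "B = {g - p (m - h) | m g. (m, g) \<in> \<Gamma>}"
  have "B \<noteq> {}"
    using partial_linear_graph_zero[OF \<Gamma>] unfolding B_def by blast
  moreover have "\<forall>b\<in>B. b \<preceq> p (0 + h) - 0"
    using separated partial_linear_graph_zero[OF \<Gamma>] unfolding B_def by blast
  ultimately obtain c where c: "is_fsup \<mu> B c"
    using dedekind_complete unfolding fuzzy_dedekind_complete_def by blast
  show thesis
  proof
    show "g - p (m - h) \<preceq> c" if "(m, g) \<in> \<Gamma>" for m g
      using c that unfolding is_fsup_def B_def by blast
    show "c \<preceq> p (m + h) - g" if "(m, g) \<in> \<Gamma>" for m g
      using c separated[OF _ that] unfolding is_fsup_def B_def by blast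
  qed
qed

lemma graph_extend_dominated:
  assumes \<Gamma>: "partial_linear_graph \<Gamma>" and dom: "\<And>x a. (x, a) \<in> \<Gamma> \<Longrightarrow> a \<preceq> p x"
    and lower: "\<And>m g. (m, g) \<in> \<Gamma> \<Longrightarrow> g - p (m - h) \<preceq> c"
    and upper: "\<And>m g. (m, g) \<in> \<Gamma> \<Longrightarrow> c \<preceq> p (m + h) - g"
    and "(x, a) \<in> graph_extend \<Gamma> h c"
  shows "a \<preceq> p x"
proof -
  obtain m g t where mg: "(m, g) \<in> \<Gamma>" and x: "x = m + t *\<^sub>R h" and a: "a = g + t *\<^sub>R c"
    using assms(5) unfolding graph_extend_def by blast
  \<comment> \<open>For \<open>t \<noteq> 0\<close>, apply the bound on \<open>c\<close> to \<open>(m, g) /\<^sub>R |t|\<close> and rescale by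
      positive homogeneity of \<open>p\<close>.\<close>
  consider "t = 0" | "t > 0" | "t < 0"
    by linarith
  then show ?thesis
  proof cases
    case 1
    then show ?thesis
      using dom mg x a by simp
  next
    case 2
    have "c \<preceq> p (m /\<^sub>R t + h) - g /\<^sub>R t"
      using upper partial_linear_graph_scaleR[OF \<Gamma> mg] by blast
    then have "t *\<^sub>R c \<preceq> t *\<^sub>R (p (m /\<^sub>R t + h) - g /\<^sub>R t)"
      by (rule scaleR_left_mono[OF _ 2])
    also have "t *\<^sub>R (p (m /\<^sub>R t + h) - g /\<^sub>R t) = p x - g"
      using p_pos_homogeneous[OF 2, of "m /\<^sub>R t + h"] 2 x
      by (simp add: scaleR_diff_right scaleR_add_right)
    finally have "t *\<^sub>R c + g \<preceq> p x - g + g"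
      by (rule add_right_mono)
    then show ?thesis
      using a by (simp add: add.commute)
  next
    case 3
    define s where "s = - t"
    have s: "0 < s"
      using 3 by (simp add: s_def)
    have "g /\<^sub>R s - p (m /\<^sub>R s - h) \<preceq> c"
      using lower partial_linear_graph_scaleR[OF \<Gamma> mg] by blast
    then have "s *\<^sub>R (g /\<^sub>R s - p (m /\<^sub>R s - h)) \<preceq> s *\<^sub>R c"
      by (rule scaleR_left_mono[OF _ s])
    moreover have "s *\<^sub>R (g /\<^sub>R s - p (m /\<^sub>R s - h)) = g - p x"
      using p_pos_homogeneous[OF s, of "m /\<^sub>R s - h"] s x
      by (simp add: scaleR_diff_right s_def)
    ultimately have "g - p x \<preceq> s *\<^sub>R c"
      by simp
    then have "g - s *\<^sub>R c \<preceq> p x"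
      using diff_le_diff_iff_add_le[of g "p x" "s *\<^sub>R c" 0]
        diff_le_diff_iff_add_le[of g "s *\<^sub>R c" "p x" 0]
      by (simp add: add.commute)
    then show ?thesis
      using a by (simp add: s_def)
  qed
qed

lemma dominated_graph_extension_exists:
  assumes \<Gamma>: "partial_linear_graph \<Gamma>" and dom: "\<And>x a. (x, a) \<in> \<Gamma> \<Longrightarrow> a \<preceq> p x"
    and h: "h \<notin> Domain \<Gamma>"
  obtains \<Gamma>' where "partial_linear_graph \<Gamma>'" "\<And>x a. (x, a) \<in> \<Gamma>' \<Longrightarrow> a \<preceq> p x" "\<Gamma> \<subset> \<Gamma>'"
proof -
  obtain c where "\<And>m g. (m, g) \<in> \<Gamma> \<Longrightarrow> g - p (m - h) \<preceq> c"
    and "\<And>m g. (m, g) \<in> \<Gamma> \<Longrightarrow> c \<preceq> p (m + h) - g"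
    using extension_value_exists[OF \<Gamma> dom] by blast
  then have "\<And>x a. (x, a) \<in> graph_extend \<Gamma> h c \<Longrightarrow> a \<preceq> p x"
    using graph_extend_dominated[OF \<Gamma> dom] by blast
  moreover have "\<Gamma> \<subset> graph_extend \<Gamma> h c"
    using subset_graph_extend[OF \<Gamma>] mem_graph_extend[OF \<Gamma>] h by blast
  ultimately show thesis
    using that partial_linear_graph_graph_extend[OF \<Gamma> h] by blast
qed

theorem dominated_extension:
  assumes V: "subspace V"
    and f_add: "\<And>x y. x \<in> V \<Longrightarrow> y \<in> V \<Longrightarrow> f (x + y) = f x + f y"
    and f_scaleR: "\<And>c x. x \<in> V \<Longrightarrow> f (c *\<^sub>R x) = c *\<^sub>R f x"
    and f_dom: "\<And>x. x \<in> V \<Longrightarrow> f x \<preceq> p x"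
  obtains R where "linear R" "\<And>x. R x \<preceq> p x" "\<And>x. x \<in> V \<Longrightarrow> R x = f x"
proof -
  define \<Gamma>\<^sub>0 where "\<Gamma>\<^sub>0 = {(x, f x) | x. x \<in> V}"
  define A where "A = {\<Gamma>. partial_linear_graph \<Gamma> \<and> (\<forall>x a. (x, a) \<in> \<Gamma> \<longrightarrow> a \<preceq> p x) \<and> \<Gamma>\<^sub>0 \<subseteq> \<Gamma>}"
  have "\<Gamma>\<^sub>0 \<in> A"
    using partial_linear_graph_of_subspace[OF V f_add f_scaleR] f_dom
    unfolding A_def \<Gamma>\<^sub>0_def by blast
  moreover have "\<Union>C \<in> A" if "C \<noteq> {}" "subset.chain A C" for C
  proof -
    have "C \<subseteq> A" "chain\<^sub>\<subseteq> C"
      using that(2) by (auto simp: subset_chain_def chain_subset_def)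
    then have "partial_linear_graph (\<Union>C)"
      using partial_linear_graph_Union_chain[OF that(1)] unfolding A_def by blast
    moreover have "\<Gamma>\<^sub>0 \<subseteq> \<Union>C"
      using that(1) \<open>C \<subseteq> A\<close> unfolding A_def by blast
    ultimately show ?thesis
      using \<open>C \<subseteq> A\<close> unfolding A_def by blast
  qed
  ultimately obtain M where "M \<in> A" and maximal: "\<And>X. X \<in> A \<Longrightarrow> M \<subseteq> X \<Longrightarrow> X = M"
    using subset_Zorn_nonempty[of A] by blast
  then have M_graph: "partial_linear_graph M" and M_dom: "\<And>x a. (x, a) \<in> M \<Longrightarrow> a \<preceq> p x"
    and M_\<Gamma>\<^sub>0: "\<Gamma>\<^sub>0 \<subseteq> M"
    unfolding A_def by blast+
  have "\<exists>a. (x, a) \<in> M" for x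
  proof (rule ccontr)
    assume "\<nexists>a. (x, a) \<in> M"
    then have "x \<notin> Domain M"
      by blast
    then obtain \<Gamma>' where "partial_linear_graph \<Gamma>'" "\<And>x a. (x, a) \<in> \<Gamma>' \<Longrightarrow> a \<preceq> p x" "M \<subset> \<Gamma>'"
      using dominated_graph_extension_exists[OF M_graph M_dom] by blast
    moreover from this have "\<Gamma>' \<in> A"
      using M_\<Gamma>\<^sub>0 unfolding A_def by blast
    ultimately show False
      using maximal[of \<Gamma>'] by blast
  qed
  then obtain R where "linear R" and graph_R: "\<And>x a. (x, a) \<in> M \<longleftrightarrow> a = R x"
    using partial_linear_graph_total_imp_linear[OF M_graph] by blast
  moreover have "R x \<preceq> p x" for x
    using M_dom graph_R by blast
  moreover have "R x = f x" if "x \<in> V" for x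
  proof -
    have "(x, f x) \<in> M"
      using M_\<Gamma>\<^sub>0 that unfolding \<Gamma>\<^sub>0_def by blast
    then show ?thesis
      using graph_R by simp
  qed
  ultimately show thesis
    using that by blast
qed

corollary dominated_factorization:
  assumes "linear Q" "linear T" and kernel: "\<And>z. Q z = 0 \<Longrightarrow> T z = 0"
    and T_dom: "\<And>x. T x \<preceq> p (Q x)"
  obtains R where "linear R" "\<And>x. R x \<preceq> p x" "T = R \<circ> Q"
proof -
  \<comment> \<open>\<open>inv Q\<close> picks an arbitrary preimage; as \<open>T\<close> vanishes on the kernel of \<open>Q\<close>,
      the choice does not matter.\<close>
  define f where "f = T \<circ> inv Q"
  have f_Q: "f (Q x) = T x" for x
  proof -
    have "Q (inv Q (Q x) - x) = 0"
      using \<open>linear Q\<close> by (simp add: linear_diff f_inv_into_f)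
    then have "T (inv Q (Q x) - x) = 0"
      by (rule kernel)
    then show ?thesis
      using \<open>linear T\<close> by (simp add: f_def linear_diff)
  qed
  have f_Q_linear: "f (Q x + Q y) = f (Q x) + f (Q y)" "f (c *\<^sub>R Q x) = c *\<^sub>R f (Q x)" for x y c
    using f_Q[of "x + y"] f_Q[of "c *\<^sub>R x"] assms(1,2) by (simp_all add: linear_add linear_scale f_Q)
  have f_add: "f (u + v) = f u + f v" if "u \<in> range Q" "v \<in> range Q" for u v
    using that f_Q_linear by auto
  have f_scaleR: "f (c *\<^sub>R u) = c *\<^sub>R f u" if "u \<in> range Q" for u c
    using that f_Q_linear by auto
  have f_dom: "f u \<preceq> p u" if "u \<in> range Q" for u
    using that T_dom f_Q by auto
  obtain R where "linear R" "\<And>x. R x \<preceq> p x" and R_f: "\<And>x. x \<in> range Q \<Longrightarrow> R x = f x"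
    using dominated_extension[OF linear_subspace_image[OF \<open>linear Q\<close> subspace_UNIV] f_add
        f_scaleR f_dom] by blast
  moreover have "T = R \<circ> Q"
    using R_f f_Q by auto
  ultimately show thesis
    using that by blast
qed

end

end

section \<open>Factorization through a lattice homomorphism\<close>

lemma fuzzy_lattice_hom_pos:
  "fuzzy_lattice_hom \<mu> \<omega> Q \<Longrightarrow> Q (fjoin \<mu> x 0) = fjoin \<omega> (Q x) 0"
  by (simp add: fuzzy_lattice_hom_def linear_0)

context fuzzy_riesz
begin

lemma positive_comp_pos_subadditive:
  assumes "fuzzy_ovs \<nu>" "linear S" "fuzzy_positive \<mu> \<nu> S"
  shows "fle \<nu> (S (pos (x + y))) (S (pos x) + S (pos y))"
  using positive_linear_mono[OF assms pos_add_le] by (simp add: linear_add[OF assms(2)])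

lemma linear_comp_pos_pos_homogeneous:
  "linear S \<Longrightarrow> 0 < c \<Longrightarrow> S (pos (c *\<^sub>R x)) = c *\<^sub>R S (pos x)"
  by (simp add: pos_scaleR linear_scale)

lemma positive_and_op_fle_if_le_comp_pos:
  assumes \<nu>: "fuzzy_ovs \<nu>" and "linear R" "linear S"
    and R_le: "\<And>x. fle \<nu> (R x) (S (pos x))"
  shows "fuzzy_positive \<mu> \<nu> R" "op_fle \<mu> \<nu> R S"
  unfolding op_fle_def fuzzy_positive_def
proof (safe)
  fix x
  assume "0 \<preceq> x"
  then have "fle \<nu> (R (- x)) 0"
    using R_le[of "- x"] pos_eq_0 neg_nonneg_iff_le_0[of "- x"] \<open>linear S\<close> by (simp add: linear_0)
  then show "fle \<nu> 0 (R x)"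
    using fuzzy_ovs.neg_nonneg_iff_le_0[OF \<nu>, of "- R x"] \<open>linear R\<close> by (simp add: linear_neg)
  show "fle \<nu> 0 (S x - R x)"
    using R_le[of x] pos_eq_self[OF \<open>0 \<preceq> x\<close>] fuzzy_ovs.le_iff_diff_nonneg[OF \<nu>] by simp
qed

context
  fixes \<nu> :: "'f::real_vector \<Rightarrow> 'f \<Rightarrow> real" and \<omega> :: "'h::real_vector \<Rightarrow> 'h \<Rightarrow> real"
    and Q :: "'a \<Rightarrow> 'h" and S :: "'h \<Rightarrow> 'f" and T :: "'a \<Rightarrow> 'f"
  assumes \<nu>: "fuzzy_ovs \<nu>" and \<omega>: "fuzzy_ovs \<omega>" and Q: "fuzzy_lattice_hom \<mu> \<omega> Q"
    and "linear S" "linear T"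
    and T_pos: "fuzzy_positive \<mu> \<nu> T" and T_le: "op_fle \<mu> \<nu> T (S \<circ> Q)"
begin

lemma T_le_S_Q: "0 \<preceq> x \<Longrightarrow> fle \<nu> (T x) (S (Q x))"
  using T_le fuzzy_ovs.le_iff_diff_nonneg[OF \<nu>] by (simp add: op_fle_def fuzzy_positive_def)

lemma T_le_S_pos_Q: "fle \<nu> (T x) (S (fjoin \<omega> (Q x) 0))"
proof -
  have "T (pos x) - T x = T (pos x - x)"
    using \<open>linear T\<close> by (simp add: linear_diff)
  then have "fle \<nu> (T x) (T (pos x))"
    using T_pos pos_minus_nonneg fuzzy_ovs.le_iff_diff_nonneg[OF \<nu>]
    unfolding fuzzy_positive_def by metis
  moreover have "fle \<nu> (T (pos x)) (S (Q (pos x)))"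
    using T_le_S_Q pos_nonneg by blast
  ultimately show ?thesis
    using fuzzy_ovs.le_trans[OF \<nu>] fuzzy_lattice_hom_pos[OF Q] by metis
qed

lemma T_eq_0_if_Q_eq_0:
  assumes "Q z = 0"
  shows "T z = 0"
proof -
  have T_0: "T w = 0" if "0 \<preceq> w" "Q w = 0" for w
  proof -
    have "fle \<nu> (T w) 0"
      using T_le_S_Q[OF that(1)] that(2) \<open>linear S\<close> by (simp add: linear_0)
    moreover have "fle \<nu> 0 (T w)"
      using T_pos that(1) unfolding fuzzy_positive_def by blast
    ultimately show ?thesis
      by (rule fuzzy_ovs.le_antisym[OF \<nu>])
  qed
  have "Q (pos z) = 0"
    using fuzzy_lattice_hom_pos[OF Q, of z] assms fuzzy_ovs.fjoin_eqI[OF \<omega>]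
    by (simp add: is_fsup_def fuzzy_ovs.le_refl[OF \<omega>])
  moreover have "Q (pos z - z) = 0"
    using calculation assms Q by (simp add: fuzzy_lattice_hom_def linear_diff)
  ultimately have "T (pos z) = 0" "T (pos z - z) = 0"
    using T_0 pos_nonneg pos_minus_nonneg by blast+
  then show ?thesis
    using \<open>linear T\<close> by (simp add: linear_diff)
qed

end

end

theorem theorem5p1:
  fixes \<mu> :: "'e::real_vector \<Rightarrow> 'e \<Rightarrow> real"
    and \<nu> :: "'f::real_vector \<Rightarrow> 'f \<Rightarrow> real"
    and \<omega> :: "'h::real_vector \<Rightarrow> 'h \<Rightarrow> real"
    and Q :: "'e \<Rightarrow> 'h" and S :: "'h \<Rightarrow> 'f" and T :: "'e \<Rightarrow> 'f"
  assumes "fuzzy_riesz_space \<mu>" and "fuzzy_riesz_space \<nu>" and "fuzzy_riesz_space \<omega>"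
    and "fuzzy_dedekind_complete \<nu>"
    and "fuzzy_lattice_hom \<mu> \<omega> Q"
    and "linear S" and "fuzzy_positive \<omega> \<nu> S"
    and "linear T" and "fuzzy_positive \<mu> \<nu> T"
    and "op_fle \<mu> \<nu> T (S \<circ> Q)"
  shows "\<exists>S1 :: 'h \<Rightarrow> 'f. linear S1 \<and> T = S1 \<circ> Q \<and>
           fuzzy_positive \<omega> \<nu> S1 \<and> op_fle \<omega> \<nu> S1 S"
proof -
  interpret E: fuzzy_riesz \<mu>
    using assms(1) by (rule fuzzy_riesz_if_fuzzy_riesz_space)
  interpret H: fuzzy_riesz \<omega>
    using assms(3) by (rule fuzzy_riesz_if_fuzzy_riesz_space)
  interpret F: fuzzy_dedekind_ovs \<nu>
    by (intro fuzzy_dedekind_ovs.intro fuzzy_dedekind_ovs_axioms.intro fuzzy_riesz.axioms(1)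
        fuzzy_riesz_if_fuzzy_riesz_space assms(2,4))
  have "linear Q"
    using assms(5) by (simp add: fuzzy_lattice_hom_def)
  obtain R where "linear R" "\<And>h. fle \<nu> (R h) (S (fjoin \<omega> h 0))" "T = R \<circ> Q"
  proof (rule F.dominated_factorization[of "\<lambda>h. S (fjoin \<omega> h 0)" Q T])
    show "fle \<nu> (S (fjoin \<omega> (x + y) 0)) (S (fjoin \<omega> x 0) + S (fjoin \<omega> y 0))" for x y
      using H.positive_comp_pos_subadditive F.fuzzy_ovs_axioms assms(6,7) by blast
    show "T z = 0" if "Q z = 0" for z
      using E.T_eq_0_if_Q_eq_0 F.fuzzy_ovs_axioms H.fuzzy_ovs_axioms assms(5,6,8-10) that by blast
    show "fle \<nu> (T x) (S (fjoin \<omega> (Q x) 0))" for x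
      using E.T_le_S_pos_Q F.fuzzy_ovs_axioms H.fuzzy_ovs_axioms assms(5,6,8-10) by blast
  qed (use H.linear_comp_pos_pos_homogeneous assms(6,8) \<open>linear Q\<close> in auto)
  then show ?thesis
    using H.positive_and_op_fle_if_le_comp_pos[OF F.fuzzy_ovs_axioms _ assms(6)] by blast
qed

end
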